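(* Let $n \ge 1$, $1 \le i \le n+1$, $0 \le k \le n$, $0 \le \ell \le n-k$ be integers. Let $T(n;i,k,\ell,m)$ denote the number of rooted trees on the vertex set $[n+1]=\{1,\ldots,n+1\}$ in which the root is $i$, the root has exactly $k$ children smaller than $i$ and exactly $\ell$ children larger than $i$, and the subtrees hanging from the children smaller than $i$ contain in total $m$ vertices (so the subtrees hanging from the children larger than $i$ contain in total $n-m$ vertices). Then $$\sum_{m=k}^{n-\ell} T(n;i,k,\ell,m) \;=\; \binom{i-1}{k}\binom{n+1-i}{\ell}\,(k+\ell)\,n^{\,n-k-\ell-1}.$$
   Context: A rooted tree on a vertex set $V$ is a tree with vertex set $V$ together with a distinguished vertex (the root). Removing the root from a rooted tree leaves a forest of rooted trees whose roots are the children of the root; the "subtrees hanging from" a set of children are the components of this forest rooted at those children. Vertices are compared by their integer labels. *)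

theory Defs
  imports Complex_Main
begin

definition adj :: "nat set set \<Rightarrow> nat \<Rightarrow> nat \<Rightarrow> bool" where
  "adj E u v \<longleftrightarrow> {u, v} \<in> E"

definition is_graph :: "nat set \<Rightarrow> nat set set \<Rightarrow> bool" where
  "is_graph V E \<longleftrightarrow> (\<forall>e\<in>E. \<exists>u v. e = {u, v} \<and> u \<in> V \<and> v \<in> V \<and> u \<noteq> v)"

definition reach :: "nat set set \<Rightarrow> (nat \<times> nat) set" where
  "reach E = {(x, y). adj E x y}\<^sup>*"

definition connected_graph :: "nat set \<Rightarrow> nat set set \<Rightarrow> bool" where
  "connected_graph V E \<longleftrightarrow> (\<forall>u\<in>V. \<forall>v\<in>V. (u, v) \<in> reach E)"

definition has_cycle :: "nat set \<Rightarrow> nat set set \<Rightarrow> bool" where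
  "has_cycle V E \<longleftrightarrow> (\<exists>cs. length cs \<ge> 3 \<and> distinct cs \<and> set cs \<subseteq> V \<and>
      (\<forall>j. j + 1 < length cs \<longrightarrow> adj E (cs ! j) (cs ! (j + 1))) \<and> adj E (last cs) (hd cs))"

definition is_tree :: "nat set \<Rightarrow> nat set set \<Rightarrow> bool" where
  "is_tree V E \<longleftrightarrow> is_graph V E \<and> connected_graph V E \<and> \<not> has_cycle V E"

definition children :: "nat set set \<Rightarrow> nat \<Rightarrow> nat set" where
  "children E r = {c. adj E r c}"

definition hanging_subtree :: "nat set \<Rightarrow> nat set set \<Rightarrow> nat \<Rightarrow> nat \<Rightarrow> nat set" where
  "hanging_subtree V E r c = {v \<in> V - {r}. (c, v) \<in> reach {e \<in> E. r \<notin> e}}"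

text \<open>T(n;i,k,l,m): rooted trees on {1..n+1} with root i (a rooted tree with fixed root i is
  determined by its edge set).\<close>

definition Tcount :: "nat \<Rightarrow> nat \<Rightarrow> nat \<Rightarrow> nat \<Rightarrow> nat \<Rightarrow> nat" where
  "Tcount n i k l m = card {E. is_tree {1..n+1} E
      \<and> card {c \<in> children E i. c < i} = k
      \<and> card {c \<in> children E i. c > i} = l
      \<and> card (\<Union>c\<in>{c \<in> children E i. c < i}. hanging_subtree {1..n+1} E i c) = m}"

end

theory Submission
  imports Defs "HOL-Library.FuncSet"
begin

text \<open>A tree on V rooted at r is the same thing as its parent function on V - {r}, along
  which every vertex reaches r. Summing T(n;i,k,l,m) over m forgets the sizes of the hanging
  subtrees (they always contain the k smaller children of i and avoid its l larger ones), so the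
  sum counts the trees in which i has k smaller and l larger children. The set S of children
  can be chosen in C(i-1,k) C(n+1-i,l) ways, and deleting i turns the tree into a rooted forest
  on the other n vertices with root set S. The number f(W,S) of such forests satisfies
  f(W,S) |W| = |S| |W|^(|W|-|S|): deleting a root s whose children form T gives
  f(W,S) = \<Sum>T. f(W - {s}, (S - {s}) \<union> T), and the binomial theorem closes the induction.\<close>

section \<open>Rooted forests as parent functions\<close>

definition parent_rel :: "(nat \<Rightarrow> nat) \<Rightarrow> nat set \<Rightarrow> (nat \<times> nat) set" where
  "parent_rel q D = {(v, q v) | v. v \<in> D}"

text \<open>A forest on W with root set S is encoded by the map sending each non-root to its parent;
  it is extensional on W - S, so distinct forests are distinct functions.\<close>

definition rooted_forests :: "nat set \<Rightarrow> nat set \<Rightarrow> (nat \<Rightarrow> nat) set" where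
  "rooted_forests W S = {q \<in> W - S \<rightarrow>\<^sub>E W. \<forall>v\<in>W. \<exists>s\<in>S. (v, s) \<in> (parent_rel q (W - S))\<^sup>*}"

lemma parent_rel_mono:
  "(\<And>v. v \<in> D \<Longrightarrow> v \<in> D' \<and> q v = q' v) \<Longrightarrow> parent_rel q D \<subseteq> parent_rel q' D'"
  unfolding parent_rel_def by force

lemma finite_rooted_forests: "finite W \<Longrightarrow> finite (rooted_forests W S)"
  unfolding rooted_forests_def by (rule finite_subset[of _ "W - S \<rightarrow>\<^sub>E W"]) (auto intro: finite_PiE)

lemma rooted_forests_empty_roots: "W \<noteq> {} \<Longrightarrow> rooted_forests W {} = {}"
  unfolding rooted_forests_def by auto

lemma rooted_forests_all_roots: "rooted_forests W W = {\<lambda>_. undefined}"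
  unfolding rooted_forests_def by auto

lemma rooted_forests_remove_root:
  assumes "s \<in> S" "T \<subseteq> W - S" "q \<in> rooted_forests W S" "{v \<in> W - S. q v = s} = T"
  shows "restrict q (W - S - T) \<in> rooted_forests (W - {s}) (S - {s} \<union> T)"
proof -
  let ?q = "restrict q (W - S - T)"
  have dom: "W - {s} - (S - {s} \<union> T) = W - S - T" using assms(1) by auto
  have "?q \<in> W - S - T \<rightarrow>\<^sub>E W - {s}"
    using assms(3,4) unfolding rooted_forests_def by auto
  moreover have "\<exists>s'\<in>S - {s} \<union> T. (v, s') \<in> (parent_rel ?q (W - S - T))\<^sup>*"
    if "(v, t) \<in> (parent_rel q (W - S))\<^sup>*" "t \<in> S" "v \<noteq> s" for v t
    using that
  proof (induction rule: converse_rtrancl_induct)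
    case (step v w)
    then have v: "v \<in> W - S" "w = q v" unfolding parent_rel_def by auto
    show ?case
    proof (cases "v \<in> T")
      case False
      with v assms(4) have "(v, w) \<in> parent_rel ?q (W - S - T)" "w \<noteq> s"
        unfolding parent_rel_def by auto
      with step.IH step.prems show ?thesis by (meson converse_rtrancl_into_rtrancl)
    qed blast
  qed blast
  ultimately show ?thesis
    using assms(3) unfolding rooted_forests_def dom by fastforce
qed

lemma rooted_forests_extend_root:
  assumes "s \<in> S" "S \<subseteq> W" "T \<subseteq> W - S" "q' \<in> rooted_forests (W - {s}) (S - {s} \<union> T)"
  defines "q \<equiv> \<lambda>v. if v \<in> T then s else q' v"
  shows "q \<in> rooted_forests W S" "{v \<in> W - S. q v = s} = T" "restrict q (W - S - T) = q'"
proof -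
  have dom: "W - {s} - (S - {s} \<union> T) = W - S - T" using assms(1) by auto
  have q': "q' \<in> W - S - T \<rightarrow>\<^sub>E W - {s}"
    and reach': "\<forall>v\<in>W - {s}. \<exists>t\<in>S - {s} \<union> T. (v, t) \<in> (parent_rel q' (W - S - T))\<^sup>*"
    using assms(4) unfolding rooted_forests_def dom by auto
  have q'_in: "q' v \<in> W - {s}" if "v \<in> W - S - T" for v
    using PiE_mem[OF q' that] .
  have q'_out: "q' v = undefined" if "v \<notin> W - S - T" for v
    using PiE_arb[OF q' that] .
  show "{v \<in> W - S. q v = s} = T"
    using assms(3) q'_in unfolding q_def by fastforce
  show "restrict q (W - S - T) = q'"
    using q'_out unfolding q_def by (intro ext) auto
  have "parent_rel q' (W - S - T) \<subseteq> parent_rel q (W - S)"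
    by (rule parent_rel_mono) (auto simp: q_def)
  then have reach: "(v, t) \<in> (parent_rel q (W - S))\<^sup>*"
    if "(v, t) \<in> (parent_rel q' (W - S - T))\<^sup>*" for v t
    using that rtrancl_mono by blast
  have "\<exists>t\<in>S. (v, t) \<in> (parent_rel q (W - S))\<^sup>*" if "v \<in> W" for v
  proof (cases "v = s")
    case False
    with reach' that obtain t where t: "t \<in> S - {s} \<union> T" "(v, t) \<in> (parent_rel q' (W - S - T))\<^sup>*"
      by blast
    show ?thesis
    proof (cases "t \<in> T")
      case True
      then have "(t, s) \<in> parent_rel q (W - S)"
        using assms(3) unfolding parent_rel_def q_def by auto
      with reach[OF t(2)] assms(1) show ?thesis by (meson rtrancl_into_rtrancl)
    qed (use t reach in auto)
  qed (use assms(1) in blast)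
  moreover have "q \<in> W - S \<rightarrow>\<^sub>E W"
    using assms(1-3) q'_in q'_out unfolding q_def by (auto simp: PiE_iff extensional_def)
  ultimately show "q \<in> rooted_forests W S"
    unfolding rooted_forests_def by blast
qed

lemma bij_betw_remove_root:
  assumes "s \<in> S" "S \<subseteq> W" "T \<subseteq> W - S"
  shows "bij_betw (\<lambda>q. restrict q (W - S - T)) {q \<in> rooted_forests W S. {v \<in> W - S. q v = s} = T}
           (rooted_forests (W - {s}) (S - {s} \<union> T))"
proof (rule bij_betw_imageI)
  show "inj_on (\<lambda>q. restrict q (W - S - T)) {q \<in> rooted_forests W S. {v \<in> W - S. q v = s} = T}"
  proof (rule inj_onI, rule extensionalityI)
    fix q1 q2
    assume q1: "q1 \<in> {q \<in> rooted_forests W S. {v \<in> W - S. q v = s} = T}"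
      and q2: "q2 \<in> {q \<in> rooted_forests W S. {v \<in> W - S. q v = s} = T}"
      and eq: "restrict q1 (W - S - T) = restrict q2 (W - S - T)"
    show "q1 \<in> extensional (W - S)" "q2 \<in> extensional (W - S)"
      using q1 q2 unfolding rooted_forests_def by (simp_all add: PiE_iff)
    fix v assume v: "v \<in> W - S"
    show "q1 v = q2 v"
    proof (cases "v \<in> T")
      case True
      then have "v \<in> {v \<in> W - S. q1 v = s}" "v \<in> {v \<in> W - S. q2 v = s}"
        using q1 q2 by simp_all
      then show ?thesis by simp
    next
      case False
      then show ?thesis using v fun_cong[OF eq, of v] by simp
    qed
  qed
  show "(\<lambda>q. restrict q (W - S - T)) ` {q \<in> rooted_forests W S. {v \<in> W - S. q v = s} = T}
      = rooted_forests (W - {s}) (S - {s} \<union> T)"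
  proof (intro subset_antisym subsetI)
    fix q' assume "q' \<in> rooted_forests (W - {s}) (S - {s} \<union> T)"
    from rooted_forests_extend_root[OF assms this]
    show "q' \<in> (\<lambda>q. restrict q (W - S - T)) ` {q \<in> rooted_forests W S. {v \<in> W - S. q v = s} = T}"
      by (intro image_eqI[of _ _ "\<lambda>v. if v \<in> T then s else q' v"]) auto
  qed (use rooted_forests_remove_root[OF assms(1,3)] in blast)
qed

lemma card_rooted_forests_remove_root:
  assumes "finite W" "s \<in> S" "S \<subseteq> W"
  shows "card (rooted_forests W S) = (\<Sum>T\<in>Pow (W - S). card (rooted_forests (W - {s}) (S - {s} \<union> T)))"
proof -
  define X where "X T = {q \<in> rooted_forests W S. {v \<in> W - S. q v = s} = T}" for T
  have "rooted_forests W S = (\<Union>T\<in>Pow (W - S). X T)"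
  proof (intro subset_antisym subsetI)
    fix q assume "q \<in> rooted_forests W S"
    then show "q \<in> (\<Union>T\<in>Pow (W - S). X T)"
      unfolding X_def by (intro UN_I[of "{v \<in> W - S. q v = s}"]) auto
  qed (auto simp: X_def)
  then have "card (rooted_forests W S) = (\<Sum>T\<in>Pow (W - S). card (X T))"
    using assms(1) finite_rooted_forests by (simp only:) (rule card_UN_disjoint, auto simp: X_def)
  also have "\<dots> = (\<Sum>T\<in>Pow (W - S). card (rooted_forests (W - {s}) (S - {s} \<union> T)))"
    unfolding X_def using bij_betw_same_card[OF bij_betw_remove_root[OF assms(2,3)]]
    by (intro sum.cong) auto
  finally show ?thesis .
qed

lemma sum_Pow_power_card_diff:
  fixes y :: "'a :: comm_semiring_1"
  assumes "finite U"
  shows "(\<Sum>T\<in>Pow U. y ^ (card U - card T)) = (1 + y) ^ card U"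
proof -
  have "(1 + y) ^ card U = (\<Sum>T\<in>Pow U. (\<Prod>x\<in>T. 1) * (\<Prod>x\<in>U - T. y))"
    using prod_add[OF assms, of "\<lambda>_. 1" "\<lambda>_. y"] by simp
  also have "\<dots> = (\<Sum>T\<in>Pow U. y ^ (card U - card T))"
    using assms by (intro sum.cong) (auto simp: card_Diff_subset finite_subset)
  finally show ?thesis by simp
qed

text \<open>The factor 1 + y avoids an exponent card U - 1.\<close>

lemma sum_Pow_card_power_card_diff:
  fixes a y :: "'a :: comm_semiring_1" and U :: "'b set"
  assumes "finite U"
  shows "(1 + y) * (\<Sum>T\<in>Pow U. (a + of_nat (card T)) * y ^ (card U - card T))
       = (1 + y) ^ card U * ((1 + y) * a + of_nat (card U))"
  using assms
proof (induction U rule: finite_induct)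
  case (insert x U)
  define f where "f T = (a + of_nat (card T)) * y ^ (card U - card T)" for T :: "'b set"
  have card_T: "card T \<le> card U" "card (insert x T) = Suc (card T)" if "T \<in> Pow U" for T
    using that insert.hyps by (auto intro: card_mono card_insert_disjoint finite_subset)
  have "(\<Sum>T\<in>Pow (insert x U). (a + of_nat (card T)) * y ^ (card (insert x U) - card T))
      = (\<Sum>T\<in>Pow U. (a + of_nat (card T)) * y ^ (Suc (card U) - card T))
        + (\<Sum>T\<in>insert x ` Pow U. (a + of_nat (card T)) * y ^ (Suc (card U) - card T))"
    unfolding Pow_insert card_insert_disjoint[OF insert.hyps]
    by (rule sum.union_disjoint) (use insert.hyps in auto)
  also have "(\<Sum>T\<in>Pow U. (a + of_nat (card T)) * y ^ (Suc (card U) - card T)) = y * sum f (Pow U)"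
    unfolding f_def sum_distrib_left by (rule sum.cong) (simp_all add: card_T Suc_diff_le mult.left_commute)
  also have "(\<Sum>T\<in>insert x ` Pow U. (a + of_nat (card T)) * y ^ (Suc (card U) - card T))
      = (\<Sum>T\<in>Pow U. (a + of_nat (Suc (card T))) * y ^ (card U - card T))"
  proof (subst sum.reindex)
    show "inj_on (insert x) (Pow U)"
      using insert.hyps(2) unfolding inj_on_def by auto
  qed (use card_T in \<open>auto intro!: sum.cong\<close>)
  also have "\<dots> = sum f (Pow U) + (\<Sum>T\<in>Pow U. y ^ (card U - card T))"
    unfolding f_def sum.distrib[symmetric] by (rule sum.cong) (simp_all add: algebra_simps)
  finally show ?case
    using insert.IH insert.hyps unfolding f_def[symmetric] sum_Pow_power_card_diff[OF insert.hyps(1)]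
    by (simp add: algebra_simps)
qed simp

lemma card_rooted_forests_step:
  assumes "finite W" "s \<in> S" "S \<subseteq> W" "w \<in> W - S"
    and IH: "\<And>S'. S' \<subseteq> W - {s} \<Longrightarrow> card (rooted_forests (W - {s}) S') * card (W - {s})
      = card S' * card (W - {s}) ^ (card (W - {s}) - card S')"
  shows "card (rooted_forests W S) * card W = card S * card W ^ (card W - card S)"
proof -
  define n where "n = card W"
  define d where "d = card S"
  have "finite S" using assms(1,3) finite_subset by blast
  then have d_pos: "d \<ge> 1" and d_le_n: "d \<le> n" and card_diff: "card (W - S) = n - d"
    using assms unfolding n_def d_def by (auto simp: Suc_le_eq card_gt_0_iff card_mono card_Diff_subset)
  have "s \<noteq> w" using assms(2,4) by blast
  then have "2 = card {s, w}" by simp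
  also have "\<dots> \<le> n"
    unfolding n_def using assms by (intro card_mono) auto
  finally have n_ge_2: "n \<ge> 2" .
  have IH': "card (rooted_forests (W - {s}) (S - {s} \<union> T)) * (n - 1)
      = (d - 1 + card T) * (n - 1) ^ (card (W - S) - card T)" if T: "T \<in> Pow (W - S)" for T
  proof -
    have "card (S - {s} \<union> T) = d - 1 + card T"
      using T assms(1-3) \<open>finite S\<close> unfolding d_def
      by (subst card_Un_disjoint) (auto intro: finite_subset)
    moreover have "card (W - {s}) = n - 1" using assms(2,3) n_def by auto
    ultimately show ?thesis
      using IH[of "S - {s} \<union> T"] T assms(2,3) d_pos card_diff by auto
  qed
  have "card (rooted_forests W S) * (n - 1)
      = (\<Sum>T\<in>Pow (W - S). (d - 1 + card T) * (n - 1) ^ (card (W - S) - card T))"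
    unfolding card_rooted_forests_remove_root[OF assms(1-3)] sum_distrib_right
    using IH' by (intro sum.cong) auto
  then have "n * (card (rooted_forests W S) * (n - 1)) = n ^ (n - d) * (n * (d - 1) + (n - d))"
    using sum_Pow_card_power_card_diff[of "W - S" "n - 1" "d - 1"] assms(1) n_ge_2 card_diff
    by simp
  also have "n * (d - 1) + (n - d) = d * (n - 1)"
    using d_pos d_le_n by (cases d; cases n) (auto simp: algebra_simps)
  finally have "(card (rooted_forests W S) * n) * (n - 1) = (d * n ^ (n - d)) * (n - 1)"
    by (simp add: algebra_simps)
  then show ?thesis
    using n_ge_2 unfolding n_def d_def by simp
qed

text \<open>Multiplying by card W covers the case S = W and avoids the exponent card W - card S - 1.\<close>

theorem card_rooted_forests:
  assumes "finite W" "S \<subseteq> W"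
  shows "card (rooted_forests W S) * card W = card S * card W ^ (card W - card S)"
  using assms
proof (induction "card W" arbitrary: W S rule: less_induct)
  case less
  consider "S = {}" | "S = W" | s w where "s \<in> S" "w \<in> W - S"
    using less.prems by blast
  then show ?case
  proof cases
    case 1
    then show ?thesis using rooted_forests_empty_roots[of W] by (cases "W = {}") auto
  next
    case 2
    then show ?thesis using rooted_forests_all_roots by simp
  next
    case 3
    have "card (W - {s}) < card W"
      using 3 less.prems by (meson card_Diff1_less subsetD)
    then show ?thesis
      using card_rooted_forests_step[OF less.prems(1) 3(1) less.prems(2) 3(2)] less.hyps less.prems(1)
      by blast
  qed
qed

section \<open>Paths, cycles and leaves of trees\<close>

lemma adj_commute: "adj E u v \<longleftrightarrow> adj E v u"
  unfolding adj_def by (simp add: insert_commute)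

lemma adj_imp_reach: "adj E u v \<Longrightarrow> (u, v) \<in> reach E"
  unfolding reach_def by auto

lemma reach_trans: "(u, v) \<in> reach E \<Longrightarrow> (v, w) \<in> reach E \<Longrightarrow> (u, w) \<in> reach E"
  unfolding reach_def by (rule rtrancl_trans)

lemma reach_sym: "(u, v) \<in> reach E \<Longrightarrow> (v, u) \<in> reach E"
  using sym_rtrancl[of "{(x, y). adj E x y}"] adj_commute[of E]
  unfolding reach_def by (auto simp: sym_def)

lemma reach_mono: "E \<subseteq> E' \<Longrightarrow> (u, v) \<in> reach E \<Longrightarrow> (u, v) \<in> reach E'"
  unfolding reach_def by (rule rtrancl_mono[THEN subsetD]) (auto simp: adj_def)

lemma is_graph_adjD: "is_graph V E \<Longrightarrow> adj E u v \<Longrightarrow> u \<in> V \<and> v \<in> V \<and> u \<noteq> v"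
  unfolding is_graph_def adj_def by (fastforce simp: doubleton_eq_iff)

definition adj_path :: "nat set set \<Rightarrow> nat list \<Rightarrow> bool" where
  "adj_path E cs \<longleftrightarrow> (\<forall>j. j + 1 < length cs \<longrightarrow> adj E (cs ! j) (cs ! (j + 1)))"

lemma has_cycle_iff:
  "has_cycle V E \<longleftrightarrow> (\<exists>cs. length cs \<ge> 3 \<and> distinct cs \<and> set cs \<subseteq> V \<and> adj_path E cs
     \<and> adj E (last cs) (hd cs))"
  unfolding has_cycle_def adj_path_def ..

lemma adj_path_snoc:
  assumes "cs \<noteq> []"
  shows "adj_path E (cs @ [w]) \<longleftrightarrow> adj_path E cs \<and> adj E (last cs) w"
proof -
  have last: "(cs @ [w]) ! (length cs - 1) = last cs" "(cs @ [w]) ! (length cs - 1 + 1) = w"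
    using assms by (simp_all add: last_conv_nth nth_append)
  have split: "j + 1 < length (cs @ [w]) \<longleftrightarrow> j + 1 < length cs \<or> j = length cs - 1" for j
    using assms by (cases cs) auto
  have inner: "(cs @ [w]) ! j = cs ! j" "(cs @ [w]) ! (j + 1) = cs ! (j + 1)" if "j + 1 < length cs" for j
    using that by (simp_all add: nth_append)
  show ?thesis
    unfolding adj_path_def split
  proof (intro iffI conjI allI impI)
    fix j
    assume "\<forall>j. j + 1 < length cs \<or> j = length cs - 1 \<longrightarrow> adj E ((cs @ [w]) ! j) ((cs @ [w]) ! (j + 1))"
    then show "j + 1 < length cs \<Longrightarrow> adj E (cs ! j) (cs ! (j + 1))" "adj E (last cs) w"
      using inner last by metis+
  next
    fix j
    assume "(\<forall>j. j + 1 < length cs \<longrightarrow> adj E (cs ! j) (cs ! (j + 1))) \<and> adj E (last cs) w"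
      "j + 1 < length cs \<or> j = length cs - 1"
    then show "adj E ((cs @ [w]) ! j) ((cs @ [w]) ! (j + 1))"
      using inner last by auto
  qed
qed

lemma adj_path_drop: "adj_path E cs \<Longrightarrow> adj_path E (drop j cs)"
  unfolding adj_path_def by (auto simp: add.assoc)

lemma adj_path_mono: "E \<subseteq> E' \<Longrightarrow> adj_path E cs \<Longrightarrow> adj_path E' cs"
  unfolding adj_path_def adj_def by blast

lemma has_cycle_mono:
  assumes "has_cycle V E" "V \<subseteq> V'" "E \<subseteq> E'"
  shows "has_cycle V' E'"
proof -
  obtain cs where "length cs \<ge> 3" "distinct cs" "set cs \<subseteq> V" "adj_path E cs" "adj E (last cs) (hd cs)"
    using assms(1) unfolding has_cycle_iff by blast
  then show ?thesis
    unfolding has_cycle_iff using assms(2,3) adj_path_mono[OF assms(3)]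
    by (intro exI[of _ cs]) (auto simp: adj_def)
qed

lemma cycle_vertex_two_neighbours:
  assumes "length cs \<ge> 3" "distinct cs" "adj_path E cs" "adj E (last cs) (hd cs)" "v \<in> set cs"
  shows "\<exists>a b. a \<noteq> b \<and> adj E v a \<and> adj E v b"
proof -
  define L where "L = length cs"
  obtain j where j: "j < L" "cs ! j = v" using assms(5) unfolding L_def by (meson in_set_conv_nth)
  define nx where "nx = (if j + 1 < L then j + 1 else 0)"
  define pv where "pv = (if j = 0 then L - 1 else j - 1)"
  have "cs \<noteq> []" using assms(1) by auto
  then have ends: "last cs = cs ! (L - 1)" "hd cs = cs ! 0"
    by (simp_all add: L_def last_conv_nth hd_conv_nth)
  have "adj E v (cs ! nx)"
  proof (cases "j + 1 < L")
    case True
    then show ?thesis using assms(3) j unfolding adj_path_def nx_def L_def by auto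
  next
    case False
    then have "j = L - 1" using j by simp
    then show ?thesis using False assms(4) ends j by (simp add: nx_def)
  qed
  moreover have "adj E v (cs ! pv)"
  proof (cases "j = 0")
    case True
    then show ?thesis using assms(4) ends j adj_commute by (simp add: pv_def)
  next
    case False
    then have "j - 1 + 1 < L" "j - 1 + 1 = j" using j by simp_all
    then show ?thesis
      using assms(3) j False adj_commute unfolding adj_path_def pv_def L_def by metis
  qed
  moreover have "nx < L" "pv < L" "nx \<noteq> pv"
    using assms(1) j unfolding nx_def pv_def L_def by auto
  then have "cs ! nx \<noteq> cs ! pv"
    using assms(2) unfolding L_def by (simp add: nth_eq_iff_index_eq)
  ultimately show ?thesis by blast
qed

lemma has_cycle_remove_leaf:
  assumes "has_cycle V E" "\<And>w. adj E v w \<Longrightarrow> w = u"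
  shows "has_cycle (V - {v}) {e \<in> E. v \<notin> e}"
proof -
  obtain cs where cs: "length cs \<ge> 3" "distinct cs" "set cs \<subseteq> V" "adj_path E cs"
    "adj E (last cs) (hd cs)"
    using assms(1) unfolding has_cycle_iff by blast
  have "v \<notin> set cs"
    using cycle_vertex_two_neighbours[OF cs(1,2,4,5)] assms(2) by metis
  then have "adj {e \<in> E. v \<notin> e} a b" if "adj E a b" "a \<in> set cs" "b \<in> set cs" for a b
    using that unfolding adj_def by auto
  moreover have "cs ! j \<in> set cs" "cs ! (j + 1) \<in> set cs" if "j + 1 < length cs" for j
    using that by simp_all
  moreover have "last cs \<in> set cs" "hd cs \<in> set cs"
    using cs(1) by (auto intro: last_in_set hd_in_set)
  ultimately show ?thesis
    unfolding has_cycle_iff using cs \<open>v \<notin> set cs\<close> unfolding adj_path_def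
    by (intro exI[of _ cs]) auto
qed

lemma tree_add_leaf:
  assumes "is_tree V E" "u \<in> V" "v \<notin> V"
  shows "is_tree (insert v V) (insert {v, u} E)"
proof -
  have graph: "is_graph V E" and conn: "connected_graph V E" and acyclic: "\<not> has_cycle V E"
    using assms(1) unfolding is_tree_def by auto
  have "is_graph (insert v V) (insert {v, u} E)"
    using graph assms(2,3) unfolding is_graph_def by (metis insertCI insertE)
  moreover have "(x, u) \<in> reach (insert {v, u} E)" if "x \<in> insert v V" for x
  proof (cases "x = v")
    case True
    then show ?thesis by (intro adj_imp_reach) (simp add: adj_def)
  next
    case False
    then have "(x, u) \<in> reach E" using conn that assms(2) unfolding connected_graph_def by auto
    then show ?thesis by (rule reach_mono[rotated]) auto
  qed
  then have "connected_graph (insert v V) (insert {v, u} E)"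
    unfolding connected_graph_def by (metis reach_sym reach_trans)
  moreover have "\<not> has_cycle (insert v V) (insert {v, u} E)"
  proof
    assume "has_cycle (insert v V) (insert {v, u} E)"
    moreover have "w = u" if "adj (insert {v, u} E) v w" for w
      using that is_graph_adjD[OF graph, of v w] assms(3) by (auto simp: adj_def doubleton_eq_iff)
    ultimately have "has_cycle (insert v V - {v}) {e \<in> insert {v, u} E. v \<notin> e}"
      by (rule has_cycle_remove_leaf)
    then have "has_cycle V E" by (rule has_cycle_mono) auto
    then show False using acyclic by contradiction
  qed
  ultimately show ?thesis unfolding is_tree_def by blast
qed

lemma reach_remove_leaf:
  assumes "(x, y) \<in> reach E" "x \<noteq> v" "\<And>w. adj E v w \<Longrightarrow> w = u"
  shows "(x, y) \<in> reach (E - {{v, u}}) \<or> (y = v \<and> (x, u) \<in> reach (E - {{v, u}}))"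
  using assms(1) unfolding reach_def[of E]
proof (induction rule: rtrancl_induct)
  case base
  then show ?case by (simp add: reach_def)
next
  case (step y z)
  then have yz: "adj E y z" by simp
  have v_isolated: "\<not> adj (E - {{v, u}}) w v" for w
    using assms(3) by (auto simp: adj_def insert_commute)
  from step.IH show ?case
  proof
    assume xy: "(x, y) \<in> reach (E - {{v, u}})"
    show ?thesis
    proof (cases "z = v")
      case True
      then have "y = u" using yz assms(3) adj_commute by metis
      then show ?thesis using xy True by simp
    next
      case False
      have "y \<noteq> v"
      proof
        assume "y = v"
        with xy have "(x, v) \<in> {(a, b). adj (E - {{v, u}}) a b}\<^sup>*" by (simp add: reach_def)
        then show False using assms(2) v_isolated by (cases rule: rtranclE) auto
      qed
      then have "adj (E - {{v, u}}) y z" using yz False by (auto simp: adj_def doubleton_eq_iff)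
      then show ?thesis using xy adj_imp_reach reach_trans by blast
    qed
  next
    assume "y = v \<and> (x, u) \<in> reach (E - {{v, u}})"
    then show ?thesis using yz assms(3) by auto
  qed
qed

lemma tree_remove_leaf:
  assumes "is_tree V E" "adj E v u" "\<And>w. adj E v w \<Longrightarrow> w = u"
  shows "is_tree (V - {v}) (E - {{v, u}})"
proof -
  have graph: "is_graph V E" and conn: "connected_graph V E" and acyclic: "\<not> has_cycle V E"
    using assms(1) unfolding is_tree_def by auto
  have "is_graph (V - {v}) (E - {{v, u}})"
    unfolding is_graph_def
  proof
    fix e assume e: "e \<in> E - {{v, u}}"
    then obtain a b where ab: "e = {a, b}" "a \<in> V" "b \<in> V" "a \<noteq> b"
      using graph unfolding is_graph_def by blast
    have "a \<noteq> v" "b \<noteq> v"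
      using e ab assms(3)[of a] assms(3)[of b] unfolding adj_def by (auto simp: insert_commute)
    then show "\<exists>a b. e = {a, b} \<and> a \<in> V - {v} \<and> b \<in> V - {v} \<and> a \<noteq> b"
      using ab by blast
  qed
  moreover have "connected_graph (V - {v}) (E - {{v, u}})"
    using conn reach_remove_leaf[OF _ _ assms(3)] unfolding connected_graph_def by blast
  moreover have "\<not> has_cycle (V - {v}) (E - {{v, u}})"
    using acyclic has_cycle_mono[of "V - {v}" "E - {{v, u}}" V E] by blast
  ultimately show ?thesis unfolding is_tree_def by blast
qed

lemma is_tree_singleton: "is_tree {r} {}"
proof -
  have "\<not> has_cycle {r} {}"
    unfolding has_cycle_def adj_def by simp
  then show ?thesis
    unfolding is_tree_def is_graph_def connected_graph_def reach_def by simp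
qed

lemma adj_path_back_edge_cycle:
  assumes "distinct cs" "set cs \<subseteq> V" "adj_path E cs" "adj E (last cs) (cs ! j)"
    "j + 3 \<le> length cs"
  shows "has_cycle V E"
  unfolding has_cycle_iff
proof (intro exI[of _ "drop j cs"] conjI)
  have "hd (drop j cs) = cs ! j" "last (drop j cs) = last cs"
    using assms(5) by (simp_all add: hd_drop_conv_nth)
  then show "adj E (last (drop j cs)) (hd (drop j cs))" using assms(4) by simp
qed (use assms in \<open>auto simp: adj_path_drop dest: in_set_dropD\<close>)

lemma maximal_adj_path:
  assumes "is_graph V E" "finite V" "r \<in> V"
  obtains cs where "cs \<noteq> []" "hd cs = r" "distinct cs" "set cs \<subseteq> V" "adj_path E cs"
    "\<And>w. adj E (last cs) w \<Longrightarrow> w \<in> set cs"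
proof -
  define P where "P cs \<longleftrightarrow> cs \<noteq> [] \<and> hd cs = r \<and> distinct cs \<and> set cs \<subseteq> V \<and> adj_path E cs"
    for cs
  have "P [r]" using assms(3) unfolding P_def adj_path_def by simp
  moreover have "length cs < Suc (card V)" if "P cs" for cs
    using that assms(2) unfolding P_def by (metis card_mono distinct_card less_Suc_eq_le)
  ultimately obtain cs where cs: "P cs" and longest: "\<And>c. P c \<Longrightarrow> length c \<le> length cs"
    using ex_has_greatest_nat[of P "[r]" length "Suc (card V)"] by blast
  have "w \<in> set cs" if "adj E (last cs) w" for w
  proof (rule ccontr)
    assume "w \<notin> set cs"
    with cs that is_graph_adjD[OF assms(1) that] have "P (cs @ [w])"
      unfolding P_def by (simp add: adj_path_snoc)
    then show False using longest[of "cs @ [w]"] by simp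
  qed
  with cs show ?thesis using that unfolding P_def by blast
qed

lemma connected_graph_has_neighbour:
  assumes "connected_graph V E" "r \<in> V" "V \<noteq> {r}"
  obtains z where "adj E r z"
proof -
  obtain y where "y \<in> V" "y \<noteq> r" using assms(2,3) by blast
  with assms(1,2) have "(r, y) \<in> {(a, b). adj E a b}\<^sup>*"
    unfolding connected_graph_def reach_def by blast
  then show ?thesis using \<open>y \<noteq> r\<close> that by (cases rule: converse_rtranclE) auto
qed

lemma tree_has_leaf:
  assumes "is_tree V E" "finite V" "r \<in> V" "V \<noteq> {r}"
  obtains v u where "v \<in> V - {r}" "adj E v u" "\<And>w. adj E v w \<Longrightarrow> w = u"
proof -
  have graph: "is_graph V E" and conn: "connected_graph V E" and acyclic: "\<not> has_cycle V E"
    using assms(1) unfolding is_tree_def by auto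
  obtain cs where cs: "cs \<noteq> []" "hd cs = r" "distinct cs" "set cs \<subseteq> V" "adj_path E cs"
    and closed: "\<And>w. adj E (last cs) w \<Longrightarrow> w \<in> set cs"
    using maximal_adj_path[OF graph assms(2,3)] by blast
  define L where "L = length cs"
  have last: "last cs = cs ! (L - 1)" and hd: "cs ! 0 = r"
    using cs(1,2) by (simp_all add: L_def last_conv_nth hd_conv_nth)
  have "L \<ge> 2"
  proof (rule ccontr)
    assume "\<not> L \<ge> 2"
    then have "last cs = r" using last hd by (simp add: numeral_2_eq_2 less_Suc_eq)
    obtain z where "adj E r z" using connected_graph_has_neighbour[OF conn assms(3,4)] .
    then have "z \<in> set cs" "z \<noteq> r" using closed \<open>last cs = r\<close> is_graph_adjD[OF graph] by auto
    then show False using \<open>\<not> L \<ge> 2\<close> cs(1) hd unfolding L_def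
      by (cases cs) (auto simp: numeral_2_eq_2 Suc_le_eq)
  qed
  have "cs ! (L - 1) \<noteq> cs ! 0"
    using \<open>L \<ge> 2\<close> cs(3) unfolding L_def by (subst nth_eq_iff_index_eq) auto
  then have "last cs \<noteq> r" using last hd by simp
  moreover have "last cs \<in> V" using cs(1,4) by auto
  moreover have "L - 2 + 1 < L" "L - 2 + 1 = L - 1" using \<open>L \<ge> 2\<close> by auto
  then have "adj E (last cs) (cs ! (L - 2))"
    using cs(5) last adj_commute unfolding adj_path_def L_def by metis
  moreover have "w = cs ! (L - 2)" if w: "adj E (last cs) w" for w
  proof (rule ccontr)
    assume "w \<noteq> cs ! (L - 2)"
    obtain j where j: "j < L" "cs ! j = w" using closed[OF w] unfolding L_def in_set_conv_nth by blast
    have "w \<noteq> last cs" using is_graph_adjD[OF graph w] by simp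
    then have "j \<noteq> L - 1" "j \<noteq> L - 2" using j \<open>w \<noteq> cs ! (L - 2)\<close> last by auto
    with j(1) have "j + 3 \<le> length cs" unfolding L_def by linarith
    moreover have "adj E (last cs) (cs ! j)" using w j(2) by simp
    ultimately have "has_cycle V E" using adj_path_back_edge_cycle[OF cs(3,4,5)] by blast
    then show False using acyclic by contradiction
  qed
  ultimately show ?thesis using that by blast
qed

section \<open>Trees as parent functions\<close>

definition tree_edges :: "(nat \<Rightarrow> nat) \<Rightarrow> nat set \<Rightarrow> nat \<Rightarrow> nat set set" where
  "tree_edges p V r = (\<lambda>v. {v, p v}) ` (V - {r})"

lemma parent_rel_closed:
  assumes "(a, b) \<in> (parent_rel q D)\<^sup>*" "a \<in> C" "\<And>v. v \<in> C \<Longrightarrow> v \<in> D \<Longrightarrow> q v \<in> C"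
  shows "b \<in> C"
  using assms(1,2) by (induction rule: rtrancl_induct) (use assms(3) in \<open>auto simp: parent_rel_def\<close>)

lemma rooted_forest_reaches_root:
  "p \<in> rooted_forests V {r} \<Longrightarrow> v \<in> V \<Longrightarrow> (v, r) \<in> (parent_rel p (V - {r}))\<^sup>*"
  unfolding rooted_forests_def by auto

lemma rooted_forest_PiE: "p \<in> rooted_forests V {r} \<Longrightarrow> p \<in> V - {r} \<rightarrow>\<^sub>E V"
  unfolding rooted_forests_def by auto

lemma rooted_forest_no_short_cycle:
  assumes "p \<in> rooted_forests V {r}" "v \<in> V - {r}" "p v \<noteq> r"
  shows "p (p v) \<noteq> v"
proof
  assume two_cycle: "p (p v) = v"
  have "(v, r) \<in> (parent_rel p (V - {r}))\<^sup>*"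
    using rooted_forest_reaches_root[OF assms(1)] assms(2) by blast
  then have "r \<in> {v, p v}"
    by (rule parent_rel_closed) (use two_cycle in auto)
  then show False using assms(2,3) by auto
qed

lemma rooted_forest_no_fixpoint:
  assumes "p \<in> rooted_forests V {r}" "v \<in> V - {r}"
  shows "p v \<noteq> v"
proof
  assume "p v = v"
  with assms rooted_forest_no_short_cycle[OF assms] show False by simp
qed

lemma rooted_forest_has_leaf:
  assumes "finite V" "r \<in> V" "V \<noteq> {r}" "p \<in> rooted_forests V {r}"
  obtains v where "v \<in> V - {r}" "v \<notin> p ` (V - {r})"
proof (rule ccontr)
  assume "\<not> thesis"
  then have "V - {r} \<subseteq> p ` (V - {r})" using that by blast
  moreover obtain x where x: "x \<in> V" "x \<noteq> r" using assms(2,3) by blast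
  then have "(x, r) \<in> (parent_rel p (V - {r}))\<^sup>*"
    using rooted_forest_reaches_root[OF assms(4)] by blast
  then have "r \<in> p ` (V - {r})"
    using x(2) by (cases rule: rtranclE) (auto simp: parent_rel_def)
  ultimately have "V \<subseteq> p ` (V - {r})" by blast
  then have "card V \<le> card (p ` (V - {r}))"
    using assms(1) by (intro card_mono) auto
  also have "\<dots> \<le> card (V - {r})"
    using assms(1) by (intro card_image_le) simp
  also have "\<dots> < card V"
    using assms(1,2) by (rule card_Diff1_less)
  finally show False by simp
qed

lemma rooted_forest_remove_leaf:
  assumes "p \<in> rooted_forests V {r}" "v \<in> V - {r}" "v \<notin> p ` (V - {r})"
  shows "restrict p (V - {v} - {r}) \<in> rooted_forests (V - {v}) {r}"
proof -
  let ?p = "restrict p (V - {v} - {r})"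
  have "?p \<in> V - {v} - {r} \<rightarrow>\<^sub>E V - {v}"
    using rooted_forest_PiE[OF assms(1)] assms(3) by (auto simp: PiE_iff)
  moreover have "(u, r) \<in> (parent_rel ?p (V - {v} - {r}))\<^sup>*"
    if "(u, r) \<in> (parent_rel p (V - {r}))\<^sup>*" "u \<noteq> v" for u
    using that
  proof (induction rule: converse_rtrancl_induct)
    case (step u w)
    then have u: "u \<in> V - {r}" "w = p u" unfolding parent_rel_def by auto
    then have "(u, w) \<in> parent_rel ?p (V - {v} - {r})"
      using step.prems unfolding parent_rel_def by auto
    moreover have "w \<noteq> v" using u assms(3) by auto
    ultimately show ?case using step.IH by (meson converse_rtrancl_into_rtrancl)
  qed simp
  ultimately show ?thesis
    using rooted_forest_reaches_root[OF assms(1)] unfolding rooted_forests_def by auto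
qed

lemma rooted_forest_add_leaf:
  assumes "p \<in> rooted_forests (V - {v}) {r}" "v \<in> V - {r}" "u \<in> V" "u \<noteq> v"
  shows "p(v := u) \<in> rooted_forests V {r}"
proof -
  have p: "p \<in> V - {v} - {r} \<rightarrow>\<^sub>E V - {v}"
    using rooted_forest_PiE[OF assms(1)] by (simp add: set_diff_eq)
  have "(p(v := u)) x \<in> V" if "x \<in> V - {r}" for x
    using PiE_mem[OF p, of x] that assms(3) by (cases "x = v") auto
  moreover have "(p(v := u)) x = undefined" if "x \<notin> V - {r}" for x
    using PiE_arb[OF p, of x] that assms(2) by auto
  ultimately have "p(v := u) \<in> V - {r} \<rightarrow>\<^sub>E V"
    by (auto simp: PiE_iff extensional_def)
  moreover have "parent_rel p (V - {v} - {r}) \<subseteq> parent_rel (p(v := u)) (V - {r})"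
    by (rule parent_rel_mono) auto
  then have to_root: "(x, r) \<in> (parent_rel (p(v := u)) (V - {r}))\<^sup>*" if "x \<in> V - {v}" for x
    using rooted_forest_reaches_root[OF assms(1) that] rtrancl_mono by blast
  moreover have "(v, u) \<in> parent_rel (p(v := u)) (V - {r})"
    using assms(2) unfolding parent_rel_def by auto
  then have "(v, r) \<in> (parent_rel (p(v := u)) (V - {r}))\<^sup>*"
    using to_root[of u] assms(3,4) by (simp add: converse_rtrancl_into_rtrancl)
  ultimately show ?thesis
    unfolding rooted_forests_def by blast
qed

lemma tree_edges_fun_upd:
  assumes "v \<in> V - {r}"
  shows "tree_edges (p(v := u)) V r = insert {v, u} (tree_edges p (V - {v}) r)"
proof -
  have "V - {r} = insert v (V - {v} - {r})" using assms by auto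
  moreover have "(\<lambda>x. {x, (p(v := u)) x}) ` (V - {v} - {r}) = (\<lambda>x. {x, p x}) ` (V - {v} - {r})"
    by (rule image_cong) auto
  ultimately show ?thesis
    unfolding tree_edges_def by simp
qed

lemma rooted_forest_eq_restrict_upd:
  assumes "p \<in> rooted_forests V {r}" "v \<in> V - {r}"
  shows "p = (restrict p (V - {v} - {r}))(v := p v)"
  using PiE_arb[OF rooted_forest_PiE[OF assms(1)]] assms(2) by (intro ext) auto

theorem is_tree_tree_edges:
  assumes "finite V" "r \<in> V" "p \<in> rooted_forests V {r}"
  shows "is_tree V (tree_edges p V r)"
  using assms
proof (induction "card V" arbitrary: V p rule: less_induct)
  case less
  show ?case
  proof (cases "V = {r}")
    case True
    then show ?thesis using is_tree_singleton unfolding tree_edges_def by simp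
  next
    case False
    obtain v where v: "v \<in> V - {r}" "v \<notin> p ` (V - {r})"
      using rooted_forest_has_leaf[OF less.prems(1,2) False less.prems(3)] by blast
    let ?p = "restrict p (V - {v} - {r})"
    have "card (V - {v}) < card V" using v(1) less.prems(1) by (intro card_Diff1_less) auto
    moreover have "?p \<in> rooted_forests (V - {v}) {r}"
      using rooted_forest_remove_leaf[OF less.prems(3) v] .
    ultimately have "is_tree (V - {v}) (tree_edges ?p (V - {v}) r)"
      using less.hyps less.prems v by auto
    moreover have "p v \<in> V - {v}"
      using PiE_mem[OF rooted_forest_PiE[OF less.prems(3)] v(1)] rooted_forest_no_fixpoint[OF less.prems(3) v(1)]
      by simp
    ultimately have "is_tree (insert v (V - {v})) (insert {v, p v} (tree_edges ?p (V - {v}) r))"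
      by (intro tree_add_leaf) auto
    then show ?thesis
      using v(1) tree_edges_fun_upd[OF v(1), of ?p "p v"]
        rooted_forest_eq_restrict_upd[OF less.prems(3) v(1)] insert_Diff[of v V] by auto
  qed
qed

text \<open>By induction along the p-path from v to r: the edge {w, p w} also lies in the tree of q,
  and q (p w) = w would make w, p w a 2-cycle of p.\<close>

theorem inj_on_tree_edges: "inj_on (\<lambda>p. tree_edges p V r) (rooted_forests V {r})"
proof (rule inj_onI)
  fix p q
  assume p: "p \<in> rooted_forests V {r}" and q: "q \<in> rooted_forests V {r}"
    and eq: "tree_edges p V r = tree_edges q V r"
  have "q v = p v" if "v \<in> V" for v
  proof -
    have "(v, r) \<in> (parent_rel p (V - {r}))\<^sup>*"
      using rooted_forest_reaches_root[OF p that] .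
    then show ?thesis
    proof (induction rule: converse_rtrancl_induct)
      case base
      show ?case
        using PiE_arb[OF rooted_forest_PiE[OF p]] PiE_arb[OF rooted_forest_PiE[OF q]] by simp
    next
      case (step w w')
      then have w: "w \<in> V - {r}" "w' = p w" unfolding parent_rel_def by auto
      then have "{w, p w} \<in> tree_edges q V r" using eq unfolding tree_edges_def by auto
      then obtain x where x: "x \<in> V - {r}" "{w, p w} = {x, q x}" unfolding tree_edges_def by auto
      show ?case
      proof (cases "x = w")
        case False
        then have "x = p w" "q x = w" using x(2) by (auto simp: doubleton_eq_iff)
        then have "p (p w) = w" "p w \<noteq> r" using step.IH w x(1) by auto
        then show ?thesis using rooted_forest_no_short_cycle[OF p w(1)] by blast
      qed (use x(2) in \<open>auto simp: doubleton_eq_iff\<close>)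
    qed
  qed
  moreover have "q v = p v" if "v \<notin> V" for v
    using that PiE_arb[OF rooted_forest_PiE[OF p]] PiE_arb[OF rooted_forest_PiE[OF q]] by simp
  ultimately show "p = q" by (intro ext) metis
qed

theorem tree_edges_surj:
  assumes "finite V" "r \<in> V" "is_tree V E"
  obtains p where "p \<in> rooted_forests V {r}" "tree_edges p V r = E"
  using assms
proof (induction "card V" arbitrary: V E thesis rule: less_induct)
  case less
  have graph: "is_graph V E" using less.prems(4) unfolding is_tree_def by simp
  show ?case
  proof (cases "V = {r}")
    case True
    then have "E = {}" using graph unfolding is_graph_def by auto
    then show ?thesis
      using True less.prems(1) rooted_forests_all_roots[of "{r}"] unfolding tree_edges_def by auto
  next
    case False
    obtain v u where v: "v \<in> V - {r}" "adj E v u" "\<And>w. adj E v w \<Longrightarrow> w = u"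
      using tree_has_leaf[OF less.prems(4,2,3) False] by blast
    have u: "u \<in> V" "u \<noteq> v" using is_graph_adjD[OF graph v(2)] by auto
    have "card (V - {v}) < card V" using v(1) less.prems(2) by (intro card_Diff1_less) auto
    then obtain p where p: "p \<in> rooted_forests (V - {v}) {r}" "tree_edges p (V - {v}) r = E - {{v, u}}"
      using less.hyps[of "V - {v}" "E - {{v, u}}"] tree_remove_leaf[OF less.prems(4) v(2,3)]
        less.prems(2,3) v(1) by blast
    have "tree_edges (p(v := u)) V r = insert {v, u} (E - {{v, u}})"
      using tree_edges_fun_upd[OF v(1)] p(2) by simp
    also have "\<dots> = E" using v(2) unfolding adj_def by auto
    finally show ?thesis
      using less.prems(1) rooted_forest_add_leaf[OF p(1) v(1) u] by blast
  qed
qed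

lemma children_tree_edges:
  assumes "p \<in> rooted_forests V {r}"
  shows "children (tree_edges p V r) r = {v \<in> V - {r}. p v = r}"
proof (intro subset_antisym subsetI)
  fix c assume "c \<in> children (tree_edges p V r) r"
  then obtain v where "v \<in> V - {r}" "{r, c} = {v, p v}"
    unfolding children_def adj_def tree_edges_def by auto
  then show "c \<in> {v \<in> V - {r}. p v = r}" by (auto simp: doubleton_eq_iff)
next
  fix c assume c: "c \<in> {v \<in> V - {r}. p v = r}"
  then have "{c, p c} \<in> tree_edges p V r" unfolding tree_edges_def by auto
  then show "c \<in> children (tree_edges p V r) r"
    using c unfolding children_def adj_def by (auto simp: insert_commute)
qed

theorem card_trees_with_children:
  assumes "finite V" "r \<in> V" "S \<subseteq> V - {r}"
  shows "card {E. is_tree V E \<and> children E r = S} * card (V - {r})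
    = card S * card (V - {r}) ^ (card (V - {r}) - card S)"
proof -
  let ?P = "{p \<in> rooted_forests V {r}. {v \<in> V - {r}. p v = r} = S}"
  have image: "(\<lambda>p. tree_edges p V r) ` ?P = {E. is_tree V E \<and> children E r = S}"
  proof (intro subset_antisym subsetI)
    fix E assume "E \<in> (\<lambda>p. tree_edges p V r) ` ?P"
    then show "E \<in> {E. is_tree V E \<and> children E r = S}"
      using is_tree_tree_edges[OF assms(1,2)] children_tree_edges by auto
  next
    fix E assume E: "E \<in> {E. is_tree V E \<and> children E r = S}"
    then obtain p where "p \<in> rooted_forests V {r}" "tree_edges p V r = E"
      using tree_edges_surj[OF assms(1,2)] by blast
    then show "E \<in> (\<lambda>p. tree_edges p V r) ` ?P"
      using E children_tree_edges by blast
  qed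
  have "inj_on (\<lambda>p. tree_edges p V r) ?P"
    by (rule inj_on_subset[OF inj_on_tree_edges]) blast
  then have "card {E. is_tree V E \<and> children E r = S} = card ?P"
    unfolding image[symmetric] by (rule card_image)
  also have "\<dots> = card (rooted_forests (V - {r}) S)"
    using bij_betw_same_card[OF bij_betw_remove_root[of r "{r}" V S]] assms by simp
  finally show ?thesis
    using card_rooted_forests[of "V - {r}" S] assms by simp
qed

section \<open>Hanging subtrees\<close>

lemma children_subset: "is_tree V E \<Longrightarrow> children E r \<subseteq> V - {r}"
  unfolding is_tree_def children_def using is_graph_adjD by blast

lemma hanging_subtree_descendant:
  assumes "p c = r" "(c, w) \<in> reach {e \<in> tree_edges p V r. r \<notin> e}"
  shows "(w, c) \<in> (parent_rel p (V - {r}))\<^sup>*"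
  using assms(2) unfolding reach_def
proof (induction rule: rtrancl_induct)
  case (step y z)
  then have "{y, z} \<in> tree_edges p V r" "r \<notin> {y, z}" by (auto simp: adj_def)
  then obtain x where x: "x \<in> V - {r}" "{y, z} = {x, p x}" "r \<notin> {y, z}"
    unfolding tree_edges_def by auto
  show ?case
  proof (cases "y = x")
    case True
    then have z: "z = p y" using x by (auto simp: doubleton_eq_iff)
    then have "y \<noteq> c" using x assms(1) by auto
    with step.IH obtain y' where "(y, y') \<in> parent_rel p (V - {r})" "(y', c) \<in> (parent_rel p (V - {r}))\<^sup>*"
      by (meson converse_rtranclE)
    then show ?thesis using z unfolding parent_rel_def by auto
  next
    case False
    then have "z = x" "y = p x" using x by (auto simp: doubleton_eq_iff)
    then have "(z, y) \<in> parent_rel p (V - {r})" using x unfolding parent_rel_def by auto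
    then show ?thesis using step.IH by (rule converse_rtrancl_into_rtrancl)
  qed
qed simp

lemma child_notin_hanging_subtree:
  assumes "b \<in> V - {r}" "c \<in> V - {r}" "p b = r" "p c = r" "b \<noteq> c"
  shows "b \<notin> hanging_subtree V (tree_edges p V r) r c"
proof
  assume "b \<in> hanging_subtree V (tree_edges p V r) r c"
  then have "(b, c) \<in> (parent_rel p (V - {r}))\<^sup>*"
    unfolding hanging_subtree_def using hanging_subtree_descendant[of p c r] assms(4) by blast
  then obtain b' where "(b, b') \<in> parent_rel p (V - {r})" "(b', c) \<in> (parent_rel p (V - {r}))\<^sup>*"
    using assms(5) by (meson converse_rtranclE)
  then have "(r, c) \<in> (parent_rel p (V - {r}))\<^sup>*" using assms(3) unfolding parent_rel_def by auto
  then show False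
    using assms(2) by (cases rule: converse_rtranclE) (auto simp: parent_rel_def)
qed

theorem card_hanging_subtrees_bounds:
  assumes "finite V" "r \<in> V" "is_tree V E" "A \<subseteq> children E r"
  shows "card A \<le> card (\<Union>c\<in>A. hanging_subtree V E r c)"
    and "card (\<Union>c\<in>A. hanging_subtree V E r c) \<le> card (V - {r}) - card (children E r - A)"
proof -
  obtain p where p: "p \<in> rooted_forests V {r}" "tree_edges p V r = E"
    using tree_edges_surj[OF assms(1-3)] by blast
  have children: "children E r = {v \<in> V - {r}. p v = r}"
    using children_tree_edges[OF p(1)] p(2) by simp
  let ?H = "\<Union>c\<in>A. hanging_subtree V E r c"
  have "A \<subseteq> ?H"
    using assms(4) children unfolding hanging_subtree_def reach_def by blast
  moreover have "?H \<subseteq> (V - {r}) - (children E r - A)"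
  proof
    fix w assume "w \<in> ?H"
    then obtain c where c: "c \<in> A" "w \<in> hanging_subtree V E r c" by blast
    then have "w \<notin> children E r - A"
      using child_notin_hanging_subtree[of w V r c p] assms(4) children p(2) by auto
    then show "w \<in> (V - {r}) - (children E r - A)"
      using c(2) unfolding hanging_subtree_def by blast
  qed
  moreover have "card ((V - {r}) - (children E r - A)) = card (V - {r}) - card (children E r - A)"
    using assms(1) children_subset[OF assms(3)] by (intro card_Diff_subset) (auto intro: finite_subset)
  moreover have "finite (V - {r} - (children E r - A))" using assms(1) by simp
  ultimately show "card A \<le> card ?H" "card ?H \<le> card (V - {r}) - card (children E r - A)"
    by (metis card_mono finite_subset)+
qed

section \<open>Counting trees by the children of the root\<close>

lemma finite_trees:
  assumes "finite V"
  shows "finite {E. is_tree V E}"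
proof (rule finite_subset[of _ "Pow (Pow V)"])
  show "{E. is_tree V E} \<subseteq> Pow (Pow V)"
  proof (intro subsetI PowI)
    fix E e w assume "E \<in> {E. is_tree V E}" "e \<in> E" "w \<in> e"
    then obtain u v where "e = {u, v}" "u \<in> V" "v \<in> V"
      unfolding is_tree_def is_graph_def by blast
    then show "w \<in> V" using \<open>w \<in> e\<close> by blast
  qed
qed (use assms in simp)

lemma card_trees_by_children:
  assumes "finite V"
  shows "card {E. is_tree V E \<and> P (children E r)}
    = (\<Sum>S\<in>{S. S \<subseteq> V - {r} \<and> P S}. card {E. is_tree V E \<and> children E r = S})"
proof -
  have "{E. is_tree V E \<and> P (children E r)}
      = (\<Union>S\<in>{S. S \<subseteq> V - {r} \<and> P S}. {E. is_tree V E \<and> children E r = S})"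
  proof (intro subset_antisym subsetI)
    fix E assume "E \<in> {E. is_tree V E \<and> P (children E r)}"
    then show "E \<in> (\<Union>S\<in>{S. S \<subseteq> V - {r} \<and> P S}. {E. is_tree V E \<and> children E r = S})"
      using children_subset[of V E r] by blast
  qed blast
  also have "card \<dots> = (\<Sum>S\<in>{S. S \<subseteq> V - {r} \<and> P S}. card {E. is_tree V E \<and> children E r = S})"
  proof (rule card_UN_disjoint)
    show "finite {S. S \<subseteq> V - {r} \<and> P S}"
      by (rule finite_subset[of _ "Pow V"]) (use assms in auto)
    show "\<forall>S\<in>{S. S \<subseteq> V - {r} \<and> P S}. finite {E. is_tree V E \<and> children E r = S}"
    proof
      fix S
      show "finite {E. is_tree V E \<and> children E r = S}"
        by (rule finite_subset[OF _ finite_trees[OF assms]]) blast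
    qed
  qed blast
  finally show ?thesis .
qed

lemma card_subsets_split_at:
  fixes r :: "'a :: linorder"
  assumes "finite V"
  shows "card {S. S \<subseteq> V - {r} \<and> card {c \<in> S. c < r} = k \<and> card {c \<in> S. c > r} = l}
    = (card {v \<in> V. v < r} choose k) * (card {v \<in> V. v > r} choose l)"
proof -
  let ?below = "{A. A \<subseteq> {v \<in> V. v < r} \<and> card A = k}"
  let ?above = "{B. B \<subseteq> {v \<in> V. v > r} \<and> card B = l}"
  let ?split = "\<lambda>S. ({c \<in> S. c < r}, {c \<in> S. c > r})"
  have parts: "{c \<in> A \<union> B. c < r} = A" "{c \<in> A \<union> B. c > r} = B"
    if "A \<subseteq> {v \<in> V. v < r}" "B \<subseteq> {v \<in> V. v > r}" for A B
    using that by auto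
  have "bij_betw ?split {S. S \<subseteq> V - {r} \<and> card {c \<in> S. c < r} = k \<and> card {c \<in> S. c > r} = l}
      (?below \<times> ?above)"
  proof (rule bij_betw_byWitness[where f' = "\<lambda>(A, B). A \<union> B"])
    show "\<forall>S\<in>{S. S \<subseteq> V - {r} \<and> card {c \<in> S. c < r} = k \<and> card {c \<in> S. c > r} = l}.
        (\<lambda>(A, B). A \<union> B) (?split S) = S"
      by auto
    show "\<forall>AB\<in>?below \<times> ?above. ?split ((\<lambda>(A, B). A \<union> B) AB) = AB"
      using parts by auto
    show "?split ` {S. S \<subseteq> V - {r} \<and> card {c \<in> S. c < r} = k \<and> card {c \<in> S. c > r} = l}
        \<subseteq> ?below \<times> ?above"
      by auto
    show "(\<lambda>(A, B). A \<union> B) ` (?below \<times> ?above)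
        \<subseteq> {S. S \<subseteq> V - {r} \<and> card {c \<in> S. c < r} = k \<and> card {c \<in> S. c > r} = l}"
      using parts by auto
  qed
  then have "card {S. S \<subseteq> V - {r} \<and> card {c \<in> S. c < r} = k \<and> card {c \<in> S. c > r} = l}
      = card ?below * card ?above"
    by (simp add: bij_betw_same_card card_cartesian_product)
  also have "\<dots> = (card {v \<in> V. v < r} choose k) * (card {v \<in> V. v > r} choose l)"
    using assms by (simp add: n_subsets)
  finally show ?thesis .
qed

lemma card_split_at:
  fixes r :: "'a :: linorder"
  assumes "finite S" "r \<notin> S"
  shows "card S = card {c \<in> S. c < r} + card {c \<in> S. c > r}"
proof -
  have "c < r \<or> c > r" if "c \<in> S" for c
    using that assms(2) by (metis linorder_neqE)
  then have "S = {c \<in> S. c < r} \<union> {c \<in> S. c > r}"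
    by blast
  then have "card S = card ({c \<in> S. c < r} \<union> {c \<in> S. c > r})"
    by (rule arg_cong)
  also have "\<dots> = card {c \<in> S. c < r} + card {c \<in> S. c > r}"
    using assms(1) by (intro card_Un_disjoint) auto
  finally show ?thesis .
qed

theorem card_trees_children_split_at_root:
  assumes "finite V" "r \<in> V"
  shows "card {E. is_tree V E \<and> card {c \<in> children E r. c < r} = k \<and> card {c \<in> children E r. c > r} = l}
      * card (V - {r})
    = (card {v \<in> V. v < r} choose k) * (card {v \<in> V. v > r} choose l) * (k + l)
      * card (V - {r}) ^ (card (V - {r}) - (k + l))"
proof -
  define SS where "SS = {S. S \<subseteq> V - {r} \<and> card {c \<in> S. c < r} = k \<and> card {c \<in> S. c > r} = l}"
  have per_S: "card {E. is_tree V E \<and> children E r = S} * card (V - {r})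
      = (k + l) * card (V - {r}) ^ (card (V - {r}) - (k + l))" if "S \<in> SS" for S
  proof -
    have "card S = k + l"
      using that assms(1) card_split_at[of S r] finite_subset unfolding SS_def by blast
    then show ?thesis
      using card_trees_with_children[OF assms, of S] that unfolding SS_def by simp
  qed
  have "card {E. is_tree V E \<and> card {c \<in> children E r. c < r} = k \<and> card {c \<in> children E r. c > r} = l}
      = (\<Sum>S\<in>SS. card {E. is_tree V E \<and> children E r = S})"
    using card_trees_by_children[OF assms(1), of "\<lambda>S. card {c \<in> S. c < r} = k \<and> card {c \<in> S. c > r} = l" r]
    unfolding SS_def by simp
  then have "card {E. is_tree V E \<and> card {c \<in> children E r. c < r} = k
        \<and> card {c \<in> children E r. c > r} = l} * card (V - {r})
      = card SS * ((k + l) * card (V - {r}) ^ (card (V - {r}) - (k + l)))"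
    using per_S by (simp add: sum_distrib_right)
  then show ?thesis
    unfolding SS_def card_subsets_split_at[OF assms(1)] by (simp add: mult.assoc)
qed

lemma power_eq_power_int_pred_mult:
  fixes x :: "'a :: field"
  assumes "x \<noteq> 0"
  shows "x ^ m = x powi (int m - 1) * x"
  using power_int_add_1[of x "int m - 1"] assms by simp

lemma sum_Tcount_eq_card_trees:
  assumes "i \<in> {1..n+1}"
  shows "(\<Sum>m = k..n - l. Tcount n i k l m) = card {E. is_tree {1..n+1} E
      \<and> card {c \<in> children E i. c < i} = k \<and> card {c \<in> children E i. c > i} = l}"
proof -
  define T where "T m = {E. is_tree {1..n+1} E
      \<and> card {c \<in> children E i. c < i} = k
      \<and> card {c \<in> children E i. c > i} = l
      \<and> card (\<Union>c\<in>{c \<in> children E i. c < i}. hanging_subtree {1..n+1} E i c) = m}" for m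
  have "{E. is_tree {1..n+1} E \<and> card {c \<in> children E i. c < i} = k \<and> card {c \<in> children E i. c > i} = l}
      = (\<Union>m\<in>{k..n - l}. T m)"
  proof (intro subset_antisym subsetI)
    fix E
    assume E: "E \<in> {E. is_tree {1..n+1} E \<and> card {c \<in> children E i. c < i} = k
      \<and> card {c \<in> children E i. c > i} = l}"
    then have "children E i - {c \<in> children E i. c < i} = {c \<in> children E i. c > i}"
      using children_subset[of "{1..n+1}" E i] by auto
    then have "card (\<Union>c\<in>{c \<in> children E i. c < i}. hanging_subtree {1..n+1} E i c) \<in> {k..n - l}"
      using E card_hanging_subtrees_bounds[of "{1..n+1}" i E "{c \<in> children E i. c < i}"] assms
      by auto
    with E show "E \<in> (\<Union>m\<in>{k..n - l}. T m)" unfolding T_def by blast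
  qed (auto simp: T_def)
  moreover have "card (\<Union>m\<in>{k..n - l}. T m) = (\<Sum>m = k..n - l. card (T m))"
    by (rule card_UN_disjoint) (auto simp: T_def intro: finite_subset[OF _ finite_trees])
  ultimately show ?thesis unfolding Tcount_def T_def by simp
qed

theorem mainTheorem2:
  fixes n i k l :: nat
  assumes "n \<ge> 1" and "1 \<le> i" and "i \<le> n + 1" and "k \<le> n" and "l \<le> n - k"
  shows "real (\<Sum>m = k..n - l. Tcount n i k l m)
         = real (((i - 1) choose k) * ((n + 1 - i) choose l) * (k + l))
           * (real n) powi (int n - int k - int l - 1)"
proof -
  have "{v \<in> {1..n+1}. v < i} = {1..<i}" "{v \<in> {1..n+1}. v > i} = {i<..n+1}"
    using assms(3) by auto
  then have i: "i \<in> {1..n+1}" "card ({1..n+1} - {i}) = n"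
    "card {v \<in> {1..n+1}. v < i} = i - 1" "card {v \<in> {1..n+1}. v > i} = n + 1 - i"
    using assms(2,3) by auto
  have "(\<Sum>m = k..n - l. Tcount n i k l m) * n
      = ((i - 1) choose k) * ((n + 1 - i) choose l) * (k + l) * n ^ (n - (k + l))"
    using card_trees_children_split_at_root[of "{1..n+1}" i k l] i
    unfolding sum_Tcount_eq_card_trees[OF i(1)] by simp
  then have "real (\<Sum>m = k..n - l. Tcount n i k l m) * real n
      = real (((i - 1) choose k) * ((n + 1 - i) choose l) * (k + l)) * real n ^ (n - (k + l))"
    by (metis of_nat_mult of_nat_power)
  moreover have "real n ^ (n - (k + l)) = real n powi (int n - int k - int l - 1) * real n"
  proof -
    have exponent: "int n - int k - int l - 1 = int (n - (k + l)) - 1"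
      using assms(4,5) by simp
    have "real n \<noteq> 0" using assms(1) by simp
    then show ?thesis
      unfolding exponent by (rule power_eq_power_int_pred_mult)
  qed
  ultimately show ?thesis
    using assms(1) by (simp only: mult.assoc) simp
qed

end
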